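(* The order function $\mathrm{Ord}$ (defined in the context) has the following properties. (1) $\mathrm{Ord}$, viewed as a function of the four endpoints of the two oriented segments (a function $\mathbb{R}^8\to\mathbb{R}$), is semi-algebraic. (2) $\mathrm{Ord}$ is continuous on the subdomain of pairs of oriented segments that do not intersect in their interiors. (3) Let $(e_1^n)_{n\ge1}$ and $(e_2^n)_{n\ge1}$ be sequences of oriented segments converging (endpoint-wise) to oriented segments $e_1$ and $e_2$ respectively, such that for every $n$, $e_1^n$ and $e_2^n$ do not intersect in their interiors ($e_1$ and $e_2$ themselves may intersect in their interiors). Then either $\mathrm{Ord}(e_1^n,e_2^n)\to \mathrm{Ord}(e_1,e_2)$, or the sequence $\mathrm{Ord}(e_1^n,e_2^n)$ has at most two accumulation points, namely $d$ and $-d$, where $d$ is the length of the overlap $e_1\cap e_2$.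
   Context: An oriented segment (edge) $e$ in $\mathbb{R}^2$ is given by an ordered pair of endpoints (possibly equal). For oriented segments $e_1,e_2$, choose coordinates in which the first endpoint of $e_1$ is the origin and $e_1$ runs from $(0,0)$ to $(l,0)$ along the positive $x$-axis, $l=\mathrm{len}(e_1)$. Define $d_+(e_1,e_2)=\mathrm{len}\{x\in[0,l] : \exists y\ge 0,\ (x,y)\in e_2\}$ and $d_-(e_1,e_2)=\mathrm{len}\{x\in[0,l] : \exists y\le 0,\ (x,y)\in e_2\}$ (len = one-dimensional Lebesgue measure; both are $0$ if $l=0$), i.e. $d_+$ is the length of the projection onto the segment $e_1$ of the part of $e_2$ lying on the left (nonnegative-$y$) side of $e_1$, and similarly for $d_-$. The order function is $\mathrm{Ord}(e_1,e_2)=d_+(e_1,e_2)-d_-(e_1,e_2)$. Two segments "do not intersect in their interiors" if their relative interiors are disjoint (they may touch at an endpoint of at least one of them, but may not cross or overlap along a positive length). *)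

theory Defs
  imports "HOL-Analysis.Analysis"
begin

type_synonym point = "real \<times> real"
type_synonym oseg = "point \<times> point"

definition seg_len :: "oseg \<Rightarrow> real" where
  "seg_len e = dist (fst e) (snd e)"

definition seg_set :: "oseg \<Rightarrow> point set" where
  "seg_set e = closed_segment (fst e) (snd e)"

text \<open>Coordinates of a point p in the frame where e1 runs from (0,0) to (l,0).\<close>
definition xcoord :: "oseg \<Rightarrow> point \<Rightarrow> real" where
  "xcoord e p = ((fst p - fst (fst e)) * (fst (snd e) - fst (fst e))
               + (snd p - snd (fst e)) * (snd (snd e) - snd (fst e))) / seg_len e"

definition ycoord :: "oseg \<Rightarrow> point \<Rightarrow> real" where
  "ycoord e p = ((fst (snd e) - fst (fst e)) * (snd p - snd (fst e))
               - (snd (snd e) - snd (fst e)) * (fst p - fst (fst e))) / seg_len e"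

definition d_plus :: "oseg \<Rightarrow> oseg \<Rightarrow> real" where
  "d_plus e1 e2 = (if seg_len e1 = 0 then 0 else
     measure lborel {x \<in> {0..seg_len e1}. \<exists>p \<in> seg_set e2. xcoord e1 p = x \<and> ycoord e1 p \<ge> 0})"

definition d_minus :: "oseg \<Rightarrow> oseg \<Rightarrow> real" where
  "d_minus e1 e2 = (if seg_len e1 = 0 then 0 else
     measure lborel {x \<in> {0..seg_len e1}. \<exists>p \<in> seg_set e2. xcoord e1 p = x \<and> ycoord e1 p \<le> 0})"

definition Ord :: "oseg \<Rightarrow> oseg \<Rightarrow> real" where
  "Ord e1 e2 = d_plus e1 e2 - d_minus e1 e2"

text \<open>Relative interiors disjoint (open_segment a a = {}).\<close>
definition no_interior_intersection :: "oseg \<Rightarrow> oseg \<Rightarrow> bool" where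
  "no_interior_intersection e1 e2 \<longleftrightarrow>
     open_segment (fst e1) (snd e1) \<inter> open_segment (fst e2) (snd e2) = {}"

text \<open>Multivariate real polynomial expressions, points of R^n as real lists of length n.\<close>
datatype mpoly = Var nat | Const real | Add mpoly mpoly | Mul mpoly mpoly | Neg mpoly

primrec mpeval :: "mpoly \<Rightarrow> real list \<Rightarrow> real" where
  "mpeval (Var i) xs = xs ! i"
| "mpeval (Const c) xs = c"
| "mpeval (Add p q) xs = mpeval p xs + mpeval q xs"
| "mpeval (Mul p q) xs = mpeval p xs * mpeval q xs"
| "mpeval (Neg p) xs = - mpeval p xs"

definition Rn :: "nat \<Rightarrow> real list set" where
  "Rn n = {xs. length xs = n}"

inductive semialgebraic :: "nat \<Rightarrow> real list set \<Rightarrow> bool" for n where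
  sa_zero: "semialgebraic n {xs \<in> Rn n. mpeval p xs = 0}"
| sa_pos: "semialgebraic n {xs \<in> Rn n. mpeval p xs > 0}"
| sa_union: "semialgebraic n A \<Longrightarrow> semialgebraic n B \<Longrightarrow> semialgebraic n (A \<union> B)"
| sa_inter: "semialgebraic n A \<Longrightarrow> semialgebraic n B \<Longrightarrow> semialgebraic n (A \<inter> B)"
| sa_compl: "semialgebraic n A \<Longrightarrow> semialgebraic n (Rn n - A)"

definition semialgebraic_fun :: "nat \<Rightarrow> (real list \<Rightarrow> real) \<Rightarrow> bool" where
  "semialgebraic_fun n f \<longleftrightarrow>
     semialgebraic (Suc n) {xs \<in> Rn (Suc n). xs ! n = f (take n xs)}"

definition Ord8 :: "real list \<Rightarrow> real" where
  "Ord8 xs = Ord ((xs!0, xs!1), (xs!2, xs!3)) ((xs!4, xs!5), (xs!6, xs!7))"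

definition overlap_len :: "oseg \<Rightarrow> oseg \<Rightarrow> real" where
  "overlap_len e1 e2 = diameter (seg_set e1 \<inter> seg_set e2)"

end

theory Submission
  imports Defs
begin

(*
  Put the first segment e1 (of length l > 0) into its own frame, where it runs
  from (0,0) to (l,0), and let (x1,y1), (x2,y2) be the frame coordinates of the endpoints of e2.
  The part of e2 with y >= 0 is the image of a parameter interval, so its projection is an
  interval and d_plus = ival of its endpoints, an explicit expression built from max, min,
  division and a case split on the signs of y1, y2 (proj_left); d_minus is the same with
  y negated, and Ord = ord_frame x1 y1 x2 y2 l.

  (1) Semi-algebraicity: every function built from polynomials by +, -, *, /, max, min and
      sign tests is "piecewise rational" (finitely many polynomial sign conditions, a quotient
      of polynomials on each); the frame coordinates are polynomials divided by l = sqrt(|d|^2),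
      ord_frame is positively homogeneous, and the graph of G / sqrt q is cut out by
      polynomial sign conditions.
  (2), (3) proj_left is continuous wherever (y1,y2) <> (0,0), so Ord converges except when
      e2 lies on the line of e1.  In that collinear case, segments with disjoint interiors
      satisfy |Ord| = ival x1 x2 l, a continuous quantity whose limit is the overlap length d;
      for the limit pair itself disjoint interiors force d = 0 and Ord = 0.
*)

subsection \<open>Projections of segments in the frame of e1\<close>

definition ival :: "real \<Rightarrow> real \<Rightarrow> real \<Rightarrow> real" where
  "ival a b l = max 0 (min (max a b) l - max (min a b) 0)"

lemma measure_ival: "measure lborel ({0..l} \<inter> closed_segment a b) = ival a b l"
proof -
  have "{0..l} \<inter> closed_segment a b = {max 0 (min a b) .. min l (max a b)}"
    by (auto simp: closed_segment_eq_real_ivl)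
  moreover have "min a b \<le> max a b" by simp
  ultimately show ?thesis
    by (auto simp: ival_def measure_lborel_Icc min.commute max.commute)
qed

lemma ival_bounds: "0 \<le> l \<Longrightarrow> 0 \<le> ival a b l \<and> ival a b l \<le> l"
  by (simp add: ival_def)

lemma ival_point: "ival a a l = 0"
  by (simp add: ival_def)

text \<open>Abscissa where the segment from (x1, y1) to (x2, y2) meets the x-axis.\<close>
definition cross :: "real \<Rightarrow> real \<Rightarrow> real \<Rightarrow> real \<Rightarrow> real" where
  "cross x1 y1 x2 y2 = x1 + y1 / (y1 - y2) * (x2 - x1)"

text \<open>Length of the projection to [0, l] of the part of that segment with y >= 0.\<close>
definition proj_left :: "real \<Rightarrow> real \<Rightarrow> real \<Rightarrow> real \<Rightarrow> real \<Rightarrow> real" where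
  "proj_left x1 y1 x2 y2 l =
     (if 0 \<le> y1 then (if 0 \<le> y2 then ival x1 x2 l else ival x1 (cross x1 y1 x2 y2) l)
      else (if 0 \<le> y2 then ival (cross x1 y1 x2 y2) x2 l else 0))"

lemma affine_image_interval:
  fixes x1 x2 a b :: real
  assumes ab: "a \<le> b"
  shows "(\<lambda>u. x1 + u * (x2 - x1)) ` {a..b} = closed_segment (x1 + a * (x2 - x1)) (x1 + b * (x2 - x1))"
proof -
  have "(\<lambda>u. x1 + u * (x2 - x1)) ` {a..b} = (\<lambda>u. (x2 - x1) * u + x1) ` {a..b}"
    by (simp add: mult.commute add.commute)
  also have "\<dots> = closed_segment (x1 + a * (x2 - x1)) (x1 + b * (x2 - x1))"
  proof (cases "0 \<le> x2 - x1")
    case True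
    then have "a * (x2 - x1) \<le> b * (x2 - x1)" using ab by (rule mult_right_mono[rotated])
    with True ab show ?thesis
      by (subst image_affinity_atLeastAtMost) (simp add: closed_segment_eq_real_ivl mult.commute add.commute)
  next
    case False
    then have "b * (x2 - x1) \<le> a * (x2 - x1)" using ab by (simp add: mult_right_mono_neg)
    with False ab show ?thesis
      by (subst image_affinity_atLeastAtMost) (auto simp: closed_segment_eq_real_ivl mult.commute add.commute)
  qed
  finally show ?thesis .
qed

lemma measure_proj_interval:
  assumes U: "{u \<in> {0..1}. 0 \<le> y1 + u * (y2 - y1)} = {a..b}" and ab: "a \<le> b"
  shows "measure lborel {x \<in> {0..l}. \<exists>u \<in> {0..1}. x = x1 + u * (x2 - x1) \<and> 0 \<le> y1 + u * (y2 - y1)}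
       = ival (x1 + a * (x2 - x1)) (x1 + b * (x2 - x1)) l"
proof -
  have "{x \<in> {0..l}. \<exists>u \<in> {0..1}. x = x1 + u * (x2 - x1) \<and> 0 \<le> y1 + u * (y2 - y1)}
      = {0..l} \<inter> (\<lambda>u. x1 + u * (x2 - x1)) ` {a..b}"
    unfolding U[symmetric] by blast
  then show ?thesis by (simp add: affine_image_interval[OF ab] measure_ival)
qed

lemma measure_proj_left:
  "measure lborel {x \<in> {0..l}. \<exists>u \<in> {0..1}. x = x1 + u * (x2 - x1) \<and> 0 \<le> y1 + u * (y2 - y1)}
     = proj_left x1 y1 x2 y2 l"
proof -
  define r where "r = y1 / (y1 - y2)"
  have y_affine: "y1 + u * (y2 - y1) = (1 - u) * y1 + u * y2" for u by (simp add: algebra_simps)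
  consider "0 \<le> y1" "0 \<le> y2" | "0 \<le> y1" "y2 < 0" | "y1 < 0" "0 \<le> y2" | "y1 < 0" "y2 < 0"
    by linarith
  then show ?thesis
  proof cases
    case 1
    then have "{u \<in> {0..1}. 0 \<le> y1 + u * (y2 - y1)} = {0..1}" by (auto simp: y_affine)
    from measure_proj_interval[OF this, of l x1 x2] 1 show ?thesis by (simp add: proj_left_def)
  next
    case 2
    have sign: "0 \<le> y1 + u * (y2 - y1) \<longleftrightarrow> u \<le> r" for u
    proof -
      have "0 \<le> y1 + u * (y2 - y1) \<longleftrightarrow> u * (y1 - y2) \<le> y1" by (simp add: algebra_simps)
      also have "\<dots> \<longleftrightarrow> u \<le> r" using 2 by (simp add: r_def pos_le_divide_eq)
      finally show ?thesis .
    qed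
    from sign[of 0] sign[of 1] 2 have "0 \<le> r" "r \<le> 1" by auto
    then have U: "{u \<in> {0..1}. 0 \<le> y1 + u * (y2 - y1)} = {0..r}" by (auto simp: sign)
    from measure_proj_interval[OF U \<open>0 \<le> r\<close>, of l x1 x2] 2 show ?thesis
      by (simp add: proj_left_def cross_def r_def)
  next
    case 3
    have sign: "0 \<le> y1 + u * (y2 - y1) \<longleftrightarrow> r \<le> u" for u
    proof -
      have "0 \<le> y1 + u * (y2 - y1) \<longleftrightarrow> u * (y1 - y2) \<le> y1" by (simp add: algebra_simps)
      also have "\<dots> \<longleftrightarrow> r \<le> u" using 3 by (simp add: r_def neg_divide_le_eq)
      finally show ?thesis .
    qed
    from sign[of 0] sign[of 1] 3 have "0 \<le> r" "r \<le> 1" by auto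
    then have U: "{u \<in> {0..1}. 0 \<le> y1 + u * (y2 - y1)} = {r..1}" by (auto simp: sign)
    from measure_proj_interval[OF U \<open>r \<le> 1\<close>, of l x1 x2] 3 show ?thesis
      by (simp add: proj_left_def cross_def r_def)
  next
    case 4
    have "(1 - u) * y1 + u * y2 < 0" if "u \<in> {0..1}" for u
      by (rule convex_bound_lt) (use 4 that in auto)
    then have "\<not> 0 \<le> y1 + u * (y2 - y1)" if "u \<in> {0..1}" for u
      using that by (simp add: y_affine not_le)
    with 4 show ?thesis by (simp add: proj_left_def)
  qed
qed

lemma proj_left_bounds: "0 \<le> l \<Longrightarrow> 0 \<le> proj_left x1 y1 x2 y2 l \<and> proj_left x1 y1 x2 y2 l \<le> l"
  by (simp add: proj_left_def ival_bounds)

abbreviation X1 :: "oseg \<Rightarrow> oseg \<Rightarrow> real" where "X1 e1 e2 \<equiv> xcoord e1 (fst e2)"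
abbreviation Y1 :: "oseg \<Rightarrow> oseg \<Rightarrow> real" where "Y1 e1 e2 \<equiv> ycoord e1 (fst e2)"
abbreviation X2 :: "oseg \<Rightarrow> oseg \<Rightarrow> real" where "X2 e1 e2 \<equiv> xcoord e1 (snd e2)"
abbreviation Y2 :: "oseg \<Rightarrow> oseg \<Rightarrow> real" where "Y2 e1 e2 \<equiv> ycoord e1 (snd e2)"

lemma xcoord_affine: "xcoord e ((1 - u) *\<^sub>R p + u *\<^sub>R q) = xcoord e p + u * (xcoord e q - xcoord e p)"
  by (cases "seg_len e = 0") (simp_all add: xcoord_def field_simps)

lemma ycoord_affine: "ycoord e ((1 - u) *\<^sub>R p + u *\<^sub>R q) = ycoord e p + u * (ycoord e q - ycoord e p)"
  by (cases "seg_len e = 0") (simp_all add: ycoord_def field_simps)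

lemma ex_in_seg_set: "(\<exists>p \<in> seg_set e. P p) \<longleftrightarrow> (\<exists>u \<in> {0..1}. P ((1 - u) *\<^sub>R fst e + u *\<^sub>R snd e))"
  by (auto simp: seg_set_def closed_segment_image_interval)

definition ord_frame :: "real \<Rightarrow> real \<Rightarrow> real \<Rightarrow> real \<Rightarrow> real \<Rightarrow> real" where
  "ord_frame x1 y1 x2 y2 l = proj_left x1 y1 x2 y2 l - proj_left x1 (- y1) x2 (- y2) l"

lemma d_plus_frame:
  "seg_len e1 \<noteq> 0 \<Longrightarrow> d_plus e1 e2 = proj_left (X1 e1 e2) (Y1 e1 e2) (X2 e1 e2) (Y2 e1 e2) (seg_len e1)"
  unfolding d_plus_def ex_in_seg_set xcoord_affine ycoord_affine
  by (simp add: measure_proj_left[symmetric] eq_commute[of _ "xcoord _ _ + _"])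

lemma d_minus_frame:
  "seg_len e1 \<noteq> 0 \<Longrightarrow> d_minus e1 e2 = proj_left (X1 e1 e2) (- Y1 e1 e2) (X2 e1 e2) (- Y2 e1 e2) (seg_len e1)"
proof -
  have "y1 + u * (y2 - y1) \<le> 0 \<longleftrightarrow> 0 \<le> - y1 + u * (- y2 - - y1)" for y1 y2 u :: real
    by (simp add: algebra_simps)
  then show "seg_len e1 \<noteq> 0 \<Longrightarrow> ?thesis"
    unfolding d_minus_def ex_in_seg_set xcoord_affine ycoord_affine
    by (simp add: measure_proj_left[symmetric] eq_commute[of _ "xcoord _ _ + _"])
qed

lemma Ord_frame:
  "seg_len e1 \<noteq> 0 \<Longrightarrow> Ord e1 e2 = ord_frame (X1 e1 e2) (Y1 e1 e2) (X2 e1 e2) (Y2 e1 e2) (seg_len e1)"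
  by (simp add: Ord_def ord_frame_def d_plus_frame d_minus_frame)

lemma Ord_degenerate: "seg_len e1 = 0 \<Longrightarrow> Ord e1 e2 = 0"
  by (simp add: Ord_def d_plus_def d_minus_def)

subsection \<open>Continuity of proj_left away from the collinear case\<close>

lemma ival_tendsto:
  "(a \<longlongrightarrow> A) F \<Longrightarrow> (b \<longlongrightarrow> B) F \<Longrightarrow> (l \<longlongrightarrow> L) F \<Longrightarrow>
   ((\<lambda>i. ival (a i) (b i) (l i)) \<longlongrightarrow> ival A B L) F"
  unfolding ival_def by (intro tendsto_intros)

text \<open>A limit through a sign test: away from 0 the test is eventually constant, at 0 both
  branches must agree with the value of the first one.\<close>
lemma tendsto_if_sign:
  fixes g :: "'i \<Rightarrow> real"
  assumes g: "(g \<longlongrightarrow> y) F"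
    and pos: "0 \<le> y \<Longrightarrow> (f \<longlongrightarrow> P) F"
    and neg: "y < 0 \<Longrightarrow> (h \<longlongrightarrow> N) F"
    and zero: "y = 0 \<Longrightarrow> (h \<longlongrightarrow> P) F"
  shows "((\<lambda>i. if 0 \<le> g i then f i else h i) \<longlongrightarrow> (if 0 \<le> y then P else N)) F"
proof -
  consider "y > 0" | "y < 0" | "y = 0" by linarith
  then show ?thesis
  proof cases
    case 1
    have "eventually (\<lambda>i. f i = (if 0 \<le> g i then f i else h i)) F"
      using order_tendstoD(1)[OF g 1] by (rule eventually_mono) simp
    with pos 1 show ?thesis by (auto intro: Lim_transform_eventually)
  next
    case 2
    have "eventually (\<lambda>i. h i = (if 0 \<le> g i then f i else h i)) F"
      using order_tendstoD(2)[OF g 2] by (rule eventually_mono) simp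
    with neg 2 show ?thesis by (auto intro: Lim_transform_eventually)
  next
    case 3
    then show ?thesis using pos zero by (auto intro: filterlim_If tendsto_mono[OF inf_le1])
  qed
qed

lemma proj_left_tendsto:
  fixes f1 g1 f2 g2 h :: "'i \<Rightarrow> real"
  assumes f1: "(f1 \<longlongrightarrow> x1) F" and g1: "(g1 \<longlongrightarrow> y1) F" and f2: "(f2 \<longlongrightarrow> x2) F"
    and g2: "(g2 \<longlongrightarrow> y2) F" and h: "(h \<longlongrightarrow> l) F" and nz: "(y1, y2) \<noteq> (0, 0)"
  shows "((\<lambda>i. proj_left (f1 i) (g1 i) (f2 i) (g2 i) (h i)) \<longlongrightarrow> proj_left x1 y1 x2 y2 l) F"
proof -
  let ?c = "\<lambda>i. cross (f1 i) (g1 i) (f2 i) (g2 i)"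
  have c: "(?c \<longlongrightarrow> cross x1 y1 x2 y2) F" if "y1 \<noteq> y2"
    unfolding cross_def using that by (intro tendsto_intros f1 g1 f2 g2) simp
  have A: "((\<lambda>i. ival (f1 i) (f2 i) (h i)) \<longlongrightarrow> ival x1 x2 l) F"
    by (intro ival_tendsto f1 f2 h)
  have B: "((\<lambda>i. ival (f1 i) (?c i) (h i)) \<longlongrightarrow> ival x1 (cross x1 y1 x2 y2) l) F" if "y1 \<noteq> y2"
    by (intro ival_tendsto f1 c h that)
  have C: "((\<lambda>i. ival (?c i) (f2 i) (h i)) \<longlongrightarrow> ival (cross x1 y1 x2 y2) x2 l) F" if "y1 \<noteq> y2"
    by (intro ival_tendsto f2 c h that)
  have cross_start: "cross x1 0 x2 y2 = x1" and cross_end: "y1 \<noteq> 0 \<Longrightarrow> cross x1 y1 x2 0 = x2"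
    by (simp_all add: cross_def)
  show ?thesis
    unfolding proj_left_def
    by (intro tendsto_if_sign[OF g1] tendsto_if_sign[OF g2])
      (use nz A B C cross_start cross_end ival_point in auto)
qed

subsection \<open>Segments with disjoint interiors\<close>

lemma on_line_point:
  assumes l: "seg_len e > 0" and y: "ycoord e p = 0"
  shows "p = fst e + (xcoord e p / seg_len e) *\<^sub>R (snd e - fst e)"
proof -
  obtain a1 a2 b1 b2 where e: "e = ((a1, a2), (b1, b2))" by (metis prod.collapse)
  obtain p1 p2 where p: "p = (p1, p2)" by (metis prod.collapse)
  define L where "L = seg_len e"
  define s where "s = (p1 - a1) * (b1 - a1) + (p2 - a2) * (b2 - a2)"
  have L: "L \<noteq> 0" using l by (simp add: L_def)
  have L2: "L * L = (b1 - a1)\<^sup>2 + (b2 - a2)\<^sup>2"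
    by (simp add: L_def e seg_len_def dist_Pair_Pair dist_real_def power2_commute flip: power2_eq_square)
  have coll: "(b1 - a1) * (p2 - a2) = (b2 - a2) * (p1 - a1)"
    using y L by (simp add: ycoord_def e p L_def)
  have "s * (b1 - a1) = (p1 - a1) * (L * L)" "s * (b2 - a2) = (p2 - a2) * (L * L)"
    unfolding s_def L2 using coll by algebra+
  then have "p1 = a1 + s / L / L * (b1 - a1)" "p2 = a2 + s / L / L * (b2 - a2)"
    using L by (simp_all add: field_simps)
  moreover have "xcoord e p = s / L" by (simp add: xcoord_def e p s_def L_def)
  ultimately show ?thesis by (simp add: e p L_def)
qed

lemma in_open_segment_frame:
  assumes l: "seg_len e > 0" and y: "ycoord e p = 0" and x: "0 < xcoord e p" "xcoord e p < seg_len e"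
  shows "p \<in> open_segment (fst e) (snd e)"
proof -
  define s where "s = xcoord e p / seg_len e"
  have s: "0 < s" "s < 1" using l x by (simp_all add: s_def field_simps)
  have "fst e \<noteq> snd e" using l by (auto simp: seg_len_def)
  moreover have "p = (1 - s) *\<^sub>R fst e + s *\<^sub>R snd e"
    using on_line_point[OF l y] by (simp add: s_def[symmetric] algebra_simps)
  ultimately show ?thesis unfolding in_segment(2) using s by blast
qed

lemma interior_point_contradiction:
  assumes l: "seg_len e1 > 0" and nii: "no_interior_intersection e1 e2"
    and u: "0 < u" "u < 1" and ne: "fst e2 \<noteq> snd e2"
    and y: "Y1 e1 e2 + u * (Y2 e1 e2 - Y1 e1 e2) = 0"
    and x: "0 < X1 e1 e2 + u * (X2 e1 e2 - X1 e1 e2)" "X1 e1 e2 + u * (X2 e1 e2 - X1 e1 e2) < seg_len e1"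
  shows False
proof -
  define p where "p = (1 - u) *\<^sub>R fst e2 + u *\<^sub>R snd e2"
  have "p \<in> open_segment (fst e2) (snd e2)" unfolding in_segment(2) p_def using u ne by blast
  moreover have "p \<in> open_segment (fst e1) (snd e1)"
    by (rule in_open_segment_frame[OF l]) (use y x in \<open>simp_all add: p_def xcoord_affine ycoord_affine\<close>)
  ultimately show False using nii unfolding no_interior_intersection_def by blast
qed

lemma nii_cross_outside:
  assumes l: "seg_len e1 > 0" and nii: "no_interior_intersection e1 e2"
    and y: "Y1 e1 e2 * Y2 e1 e2 < 0"
  shows "cross (X1 e1 e2) (Y1 e1 e2) (X2 e1 e2) (Y2 e1 e2) \<notin> {0<..<seg_len e1}"
proof
  assume c: "cross (X1 e1 e2) (Y1 e1 e2) (X2 e1 e2) (Y2 e1 e2) \<in> {0<..<seg_len e1}"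
  define y1 where "y1 = Y1 e1 e2"
  define y2 where "y2 = Y2 e1 e2"
  define r where "r = y1 / (y1 - y2)"
  have yy: "y1 * y2 < 0" using y by (simp add: y1_def y2_def)
  then have ne: "fst e2 \<noteq> snd e2" by (auto simp: y1_def y2_def)
  have r: "0 < r" "r < 1"
    using yy by (auto simp: r_def mult_less_0_iff divide_simps)
  have "y1 - y2 \<noteq> 0" using yy by auto
  then have "y1 + r * (y2 - y1) = 0" by (simp add: r_def field_simps)
  with c r ne show False
    by (intro interior_point_contradiction[OF l nii, of r]) (simp_all add: y1_def y2_def r_def cross_def)
qed

lemma nii_collinear_no_overlap:
  assumes l: "seg_len e1 > 0" and nii: "no_interior_intersection e1 e2"
    and y: "Y1 e1 e2 = 0" "Y2 e1 e2 = 0"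
  shows "ival (X1 e1 e2) (X2 e1 e2) (seg_len e1) = 0"
proof (rule ccontr)
  define x1 where "x1 = X1 e1 e2"
  define x2 where "x2 = X2 e1 e2"
  define lo where "lo = max (min x1 x2) 0"
  define hi where "hi = min (max x1 x2) (seg_len e1)"
  assume "ival (X1 e1 e2) (X2 e1 e2) (seg_len e1) \<noteq> 0"
  then have "lo < hi" by (auto simp: ival_def lo_def hi_def x1_def x2_def)
  define m where "m = (lo + hi) / 2"
  define u where "u = (m - x1) / (x2 - x1)"
  have m: "lo < m" "m < hi" using \<open>lo < hi\<close> by (simp_all add: m_def)
  then have x12: "x1 \<noteq> x2" by (auto simp: lo_def hi_def)
  then have ne: "fst e2 \<noteq> snd e2" by (auto simp: x1_def x2_def)
  have xu: "x1 + u * (x2 - x1) = m" using x12 by (simp add: u_def)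
  have u: "0 < u" "u < 1"
    using m x12 by (auto simp: u_def lo_def hi_def divide_simps split: if_splits)
  have "0 < m" "m < seg_len e1" using m by (auto simp: lo_def hi_def)
  with u xu y ne show False
    by (intro interior_point_contradiction[OF l nii, of u]) (simp_all add: x1_def x2_def)
qed

text \<open>Both d_plus and d_minus are at most the length of e1.\<close>
lemma ord_frame_abs_le: "0 \<le> l \<Longrightarrow> \<bar>ord_frame x1 y1 x2 y2 l\<bar> \<le> l"
  using proj_left_bounds[of l x1 y1 x2 y2] proj_left_bounds[of l x1 "- y1" x2 "- y2"]
  by (simp add: ord_frame_def abs_le_iff)

lemma Ord_abs_le: "\<bar>Ord e1 e2\<bar> \<le> seg_len e1"
proof -
  have "0 \<le> seg_len e1" by (simp add: seg_len_def)
  then show ?thesis by (cases "seg_len e1 = 0") (simp_all add: Ord_degenerate Ord_frame ord_frame_abs_le)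
qed

lemma ord_frame_collinear: "ord_frame x1 0 x2 0 l = 0"
  by (simp add: ord_frame_def proj_left_def)

lemma cross_neg: "cross x1 (- y1) x2 (- y2) = cross x1 y1 x2 y2"
proof -
  have "- y1 - - y2 = - (y1 - y2)" by simp
  then show ?thesis by (simp only: cross_def minus_divide_divide)
qed

lemma cross_in_segment:
  assumes "y1 * y2 < 0"
  shows "cross x1 y1 x2 y2 \<in> closed_segment x1 x2"
proof -
  have "y1 / (y1 - y2) \<in> {0..1}" using assms by (auto simp: mult_less_0_iff divide_simps)
  then have "cross x1 y1 x2 y2 \<in> (\<lambda>u. x1 + u * (x2 - x1)) ` {0..1}"
    by (rule rev_image_eqI) (simp add: cross_def)
  then show ?thesis by (simp add: affine_image_interval)
qed

text \<open>Splitting [x1, x2] at a point c outside (0, l) leaves all of its overlap with [0, l]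
  on one side.\<close>
lemma ival_split:
  assumes "c \<in> closed_segment x1 x2" "c \<notin> {0<..<l}" "0 \<le> l"
  shows "\<bar>ival x1 c l - ival c x2 l\<bar> = ival x1 x2 l"
proof -
  have "min x1 x2 \<le> c" "c \<le> max x1 x2"
    using assms(1) by (auto simp: closed_segment_eq_real_ivl split: if_splits)
  with assms(2,3) show ?thesis
    unfolding ival_def by (cases "x1 \<le> x2"; cases "c \<le> 0") (auto simp: min_def max_def)
qed

text \<open>When e2 does not cross the interior of e1, all of its projection is counted on one side.\<close>
lemma ord_frame_abs:
  assumes nz: "(y1, y2) \<noteq> (0, 0)" and l: "0 \<le> l"
    and outside: "y1 * y2 < 0 \<Longrightarrow> cross x1 y1 x2 y2 \<notin> {0<..<l}"
  shows "\<bar>ord_frame x1 y1 x2 y2 l\<bar> = ival x1 x2 l"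
proof -
  have c0: "cross x1 0 x2 y2 = x1" for x1 x2 y2 by (simp add: cross_def)
  have c1: "y1 \<noteq> 0 \<Longrightarrow> cross x1 y1 x2 0 = x2" for x1 y1 x2 by (simp add: cross_def)
  have "y1 * y2 < 0" if "\<not> (0 \<le> y1 \<and> 0 \<le> y2)" "\<not> (y1 \<le> 0 \<and> y2 \<le> 0)"
    using that by (auto simp: mult_less_0_iff)
  then consider "0 \<le> y1" "0 \<le> y2" | "y1 \<le> 0" "y2 \<le> 0" | "y1 * y2 < 0"
    by blast
  then show ?thesis
  proof cases
    case 1
    then have "proj_left x1 (- y1) x2 (- y2) l = 0"
      using nz by (auto simp: proj_left_def c0 c1 ival_point)
    with 1 show ?thesis using ival_bounds[OF l] by (simp add: ord_frame_def proj_left_def)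
  next
    case 2
    then have "proj_left x1 y1 x2 y2 l = 0"
      using nz by (auto simp: proj_left_def c0 c1 ival_point)
    with 2 show ?thesis using ival_bounds[OF l] by (simp add: ord_frame_def proj_left_def)
  next
    case 3
    then have "\<bar>ival x1 (cross x1 y1 x2 y2) l - ival (cross x1 y1 x2 y2) x2 l\<bar> = ival x1 x2 l"
      using outside cross_in_segment l by (intro ival_split) auto
    with 3 show ?thesis
      by (auto simp: ord_frame_def proj_left_def cross_neg mult_less_0_iff abs_minus_commute)
  qed
qed

lemma Ord_abs_nii:
  assumes l: "seg_len e1 > 0" and nii: "no_interior_intersection e1 e2"
  shows "\<bar>Ord e1 e2\<bar> = ival (X1 e1 e2) (X2 e1 e2) (seg_len e1)"
proof (cases "Y1 e1 e2 = 0 \<and> Y2 e1 e2 = 0")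
  case True
  then show ?thesis using nii_collinear_no_overlap[OF l nii] l by (simp add: Ord_frame ord_frame_collinear)
next
  case False
  with l show ?thesis
    unfolding Ord_frame[OF less_imp_neq[OF l, symmetric]]
    by (intro ord_frame_abs nii_cross_outside[OF l nii]) auto
qed

subsection \<open>Limits of the order function\<close>

context
  fixes E1 E2 :: "'i \<Rightarrow> oseg" and F :: "'i filter" and e1 e2 :: oseg
  assumes lim1: "(E1 \<longlongrightarrow> e1) F" and lim2: "(E2 \<longlongrightarrow> e2) F"
begin

lemma seg_len_tendsto: "((\<lambda>i. seg_len (E1 i)) \<longlongrightarrow> seg_len e1) F"
  unfolding seg_len_def by (intro tendsto_intros lim1)

lemma xcoord_tendsto:
  "seg_len e1 \<noteq> 0 \<Longrightarrow> (P \<longlongrightarrow> p) F \<Longrightarrow> ((\<lambda>i. xcoord (E1 i) (P i)) \<longlongrightarrow> xcoord e1 p) F"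
  unfolding xcoord_def by (intro tendsto_intros lim1 seg_len_tendsto)

lemma ycoord_tendsto:
  "seg_len e1 \<noteq> 0 \<Longrightarrow> (P \<longlongrightarrow> p) F \<Longrightarrow> ((\<lambda>i. ycoord (E1 i) (P i)) \<longlongrightarrow> ycoord e1 p) F"
  unfolding ycoord_def by (intro tendsto_intros lim1 seg_len_tendsto)

text \<open>If e1 is a point, the bound of Ord_abs_le forces convergence to Ord e1 e2 = 0.\<close>
lemma Ord_tendsto_degenerate:
  assumes "seg_len e1 = 0"
  shows "((\<lambda>i. Ord (E1 i) (E2 i)) \<longlongrightarrow> Ord e1 e2) F"
proof -
  have "((\<lambda>i. seg_len (E1 i)) \<longlongrightarrow> 0) F" using seg_len_tendsto assms by simp
  then have "((\<lambda>i. Ord (E1 i) (E2 i)) \<longlongrightarrow> 0) F"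
    by (rule Lim_null_comparison[rotated]) (simp add: Ord_abs_le)
  then show ?thesis using assms by (simp add: Ord_degenerate)
qed

lemma Ord_tendsto_transversal:
  assumes l: "seg_len e1 > 0" and nz: "(Y1 e1 e2, Y2 e1 e2) \<noteq> (0, 0)"
  shows "((\<lambda>i. Ord (E1 i) (E2 i)) \<longlongrightarrow> Ord e1 e2) F"
proof -
  have l0: "seg_len e1 \<noteq> 0" using l by simp
  let ?G = "\<lambda>i. ord_frame (X1 (E1 i) (E2 i)) (Y1 (E1 i) (E2 i)) (X2 (E1 i) (E2 i)) (Y2 (E1 i) (E2 i))
                 (seg_len (E1 i))"
  have "(?G \<longlongrightarrow> ord_frame (X1 e1 e2) (Y1 e1 e2) (X2 e1 e2) (Y2 e1 e2) (seg_len e1)) F"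
    unfolding ord_frame_def using nz
    by (intro tendsto_diff proj_left_tendsto tendsto_minus xcoord_tendsto ycoord_tendsto
        seg_len_tendsto l0 tendsto_intros lim2) auto
  moreover have "eventually (\<lambda>i. ?G i = Ord (E1 i) (E2 i)) F"
    using order_tendstoD(1)[OF seg_len_tendsto l] by (rule eventually_mono) (simp add: Ord_frame)
  ultimately show ?thesis using Ord_frame[OF l0] by (simp add: Lim_transform_eventually)
qed

lemma abs_Ord_tendsto_nii:
  assumes l: "seg_len e1 > 0" and nii: "eventually (\<lambda>i. no_interior_intersection (E1 i) (E2 i)) F"
  shows "((\<lambda>i. \<bar>Ord (E1 i) (E2 i)\<bar>) \<longlongrightarrow> ival (X1 e1 e2) (X2 e1 e2) (seg_len e1)) F"
proof -
  have l0: "seg_len e1 \<noteq> 0" using l by simp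
  have "((\<lambda>i. ival (X1 (E1 i) (E2 i)) (X2 (E1 i) (E2 i)) (seg_len (E1 i)))
          \<longlongrightarrow> ival (X1 e1 e2) (X2 e1 e2) (seg_len e1)) F"
    by (intro ival_tendsto xcoord_tendsto seg_len_tendsto l0 tendsto_intros lim2)
  moreover have "eventually (\<lambda>i. ival (X1 (E1 i) (E2 i)) (X2 (E1 i) (E2 i)) (seg_len (E1 i))
                                  = \<bar>Ord (E1 i) (E2 i)\<bar>) F"
    using eventually_conj[OF order_tendstoD(1)[OF seg_len_tendsto l] nii]
    by (rule eventually_mono) (simp add: Ord_abs_nii)
  ultimately show ?thesis by (rule Lim_transform_eventually)
qed

end

lemma diameter_isometric_image:
  assumes iso: "\<And>x y. dist (f x) (f y) = dist x y"
  shows "diameter (f ` S) = diameter S"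
proof (cases "S = {}")
  case False
  have "f ` S \<times> f ` S = (\<lambda>(x, y). (f x, f y)) ` (S \<times> S)" by auto
  then have "(SUP (x, y) \<in> f ` S \<times> f ` S. dist x y) = (SUP (x, y) \<in> S \<times> S. dist (f x) (f y))"
    by (simp add: image_image case_prod_beta')
  with False show ?thesis unfolding diameter_def by (simp add: iso)
qed simp

lemma overlap_collinear:
  assumes l: "seg_len e1 > 0" and y: "Y1 e1 e2 = 0" "Y2 e1 e2 = 0"
  shows "overlap_len e1 e2 = ival (X1 e1 e2) (X2 e1 e2) (seg_len e1)"
proof -
  define L where "L = seg_len e1"
  define x1 where "x1 = X1 e1 e2"
  define x2 where "x2 = X2 e1 e2"
  define v where "v = (1 / L) *\<^sub>R (snd e1 - fst e1)"
  define \<phi> where "\<phi> s = fst e1 + s *\<^sub>R v" for s :: real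
  have L: "L > 0" using l by (simp add: L_def)
  have "norm (snd e1 - fst e1) = L" by (simp add: L_def seg_len_def dist_norm norm_minus_commute)
  then have v: "norm v = 1" using L by (simp add: v_def)
  have iso: "dist (\<phi> s) (\<phi> t) = dist s t" for s t
    by (simp add: \<phi>_def dist_norm v flip: scaleR_diff_left)
  then have inj: "inj \<phi>" by (metis injI dist_eq_0_iff)
  have lin: "linear (\<lambda>s::real. s *\<^sub>R v)" by (rule bounded_linear.linear[OF bounded_linear_scaleR_left])
  have seg: "closed_segment (\<phi> p) (\<phi> q) = \<phi> ` closed_segment p q" for p q
    unfolding \<phi>_def closed_segment_translation closed_segment_linear_image[OF lin] image_image ..
  have "fst e1 = \<phi> 0" "snd e1 = \<phi> L" using L by (simp_all add: \<phi>_def v_def)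
  then have seg1: "seg_set e1 = \<phi> ` closed_segment 0 L" unfolding seg_set_def by (simp only: seg)
  have "fst e2 = \<phi> x1" "snd e2 = \<phi> x2"
    using on_line_point[OF l y(1)] on_line_point[OF l y(2)] by (simp_all add: \<phi>_def v_def L_def x1_def x2_def)
  then have seg2: "seg_set e2 = \<phi> ` closed_segment x1 x2" unfolding seg_set_def by (simp only: seg)
  have "seg_set e1 \<inter> seg_set e2 = \<phi> ` (closed_segment 0 L \<inter> closed_segment x1 x2)"
    unfolding seg1 seg2 image_Int[OF inj] ..
  also have "closed_segment 0 L \<inter> closed_segment x1 x2 = {max (min x1 x2) 0 .. min (max x1 x2) L}"
    using L by (auto simp: closed_segment_eq_real_ivl)
  finally have "overlap_len e1 e2 = diameter {max (min x1 x2) 0 .. min (max x1 x2) L}"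
    unfolding overlap_len_def by (simp only: diameter_isometric_image[OF iso])
  moreover have "diameter {a..b} = max 0 (b - a)" for a b :: real by (auto simp: max_def)
  ultimately show ?thesis by (simp add: ival_def L_def x1_def x2_def)
qed
lemma Ord_limit_dichotomy:
  assumes lim1: "(E1 \<longlongrightarrow> e1) F" and lim2: "(E2 \<longlongrightarrow> e2) F"
    and nii: "eventually (\<lambda>i. no_interior_intersection (E1 i) (E2 i)) F"
  shows "((\<lambda>i. Ord (E1 i) (E2 i)) \<longlongrightarrow> Ord e1 e2) F \<or>
    (seg_len e1 > 0 \<and> Y1 e1 e2 = 0 \<and> Y2 e1 e2 = 0 \<and>
     ((\<lambda>i. \<bar>Ord (E1 i) (E2 i)\<bar>) \<longlongrightarrow> overlap_len e1 e2) F)"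
proof -
  have "0 \<le> seg_len e1" by (simp add: seg_len_def)
  then consider "seg_len e1 = 0" | "seg_len e1 > 0" "(Y1 e1 e2, Y2 e1 e2) \<noteq> (0, 0)"
    | "seg_len e1 > 0" "Y1 e1 e2 = 0" "Y2 e1 e2 = 0"
    by fastforce
  then show ?thesis
  proof cases
    case 1
    then show ?thesis using Ord_tendsto_degenerate[OF lim1 lim2] by blast
  next
    case 2
    then show ?thesis using Ord_tendsto_transversal[OF lim1 lim2] by blast
  next
    case 3
    then show ?thesis
      using abs_Ord_tendsto_nii[OF lim1 lim2 3(1) nii] overlap_collinear[OF 3] by simp
  qed
qed

theorem Ord_continuous_nii:
  "continuous_on {(e1, e2). no_interior_intersection e1 e2} (\<lambda>(e1, e2). Ord e1 e2)"
proof -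
  define D where "D = {(e1, e2). no_interior_intersection e1 e2}"
  have "((\<lambda>w. Ord (fst w) (snd w)) \<longlongrightarrow> Ord e1 e2) (at (e1, e2) within D)"
    if nii: "no_interior_intersection e1 e2" for e1 e2
  proof -
    have lim1: "(fst \<longlongrightarrow> e1) (at (e1, e2) within D)"
      using tendsto_fst[OF tendsto_ident_at[of "(e1, e2)" D]] by simp
    have lim2: "(snd \<longlongrightarrow> e2) (at (e1, e2) within D)"
      using tendsto_snd[OF tendsto_ident_at[of "(e1, e2)" D]] by simp
    have "eventually (\<lambda>w. no_interior_intersection (fst w) (snd w)) (at (e1, e2) within D)"
      unfolding eventually_at_filter by (rule always_eventually) (auto simp: D_def)
    from Ord_limit_dichotomy[OF lim1 lim2 this] show ?thesis
    proof
      assume "((\<lambda>w. Ord (fst w) (snd w)) \<longlongrightarrow> Ord e1 e2) (at (e1, e2) within D)"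
      then show ?thesis .
    next
      assume c: "seg_len e1 > 0 \<and> Y1 e1 e2 = 0 \<and> Y2 e1 e2 = 0 \<and>
        ((\<lambda>w. \<bar>Ord (fst w) (snd w)\<bar>) \<longlongrightarrow> overlap_len e1 e2) (at (e1, e2) within D)"
      then have "overlap_len e1 e2 = 0"
        using overlap_collinear nii_collinear_no_overlap[OF _ nii] by auto
      with c have "((\<lambda>w. Ord (fst w) (snd w)) \<longlongrightarrow> 0) (at (e1, e2) within D)"
        by (simp add: tendsto_rabs_zero_iff)
      moreover have "Ord e1 e2 = 0" using c by (simp add: Ord_frame ord_frame_collinear)
      ultimately show ?thesis by simp
    qed
  qed
  then show ?thesis unfolding continuous_on_def case_prod_beta' D_def by auto
qed

theorem Ord_sequence_accumulation:
  fixes s1 s2 :: "nat \<Rightarrow> oseg"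
  assumes lim1: "s1 \<longlonglongrightarrow> e1" and lim2: "s2 \<longlonglongrightarrow> e2"
    and nii: "\<forall>n. no_interior_intersection (s1 n) (s2 n)"
  shows "(\<lambda>n. Ord (s1 n) (s2 n)) \<longlonglongrightarrow> Ord e1 e2 \<or>
    (\<forall>a. (\<exists>r. strict_mono r \<and> ((\<lambda>n. Ord (s1 n) (s2 n)) \<circ> r) \<longlonglongrightarrow> a)
          \<longrightarrow> a = overlap_len e1 e2 \<or> a = - overlap_len e1 e2)"
proof -
  have "eventually (\<lambda>n. no_interior_intersection (s1 n) (s2 n)) sequentially"
    using nii by simp
  from Ord_limit_dichotomy[OF lim1 lim2 this] show ?thesis
  proof
    assume "(\<lambda>n. Ord (s1 n) (s2 n)) \<longlonglongrightarrow> Ord e1 e2"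
    then show ?thesis ..
  next
    assume "seg_len e1 > 0 \<and> Y1 e1 e2 = 0 \<and> Y2 e1 e2 = 0 \<and>
      (\<lambda>n. \<bar>Ord (s1 n) (s2 n)\<bar>) \<longlonglongrightarrow> overlap_len e1 e2"
    then have abs_lim: "(\<lambda>n. \<bar>Ord (s1 n) (s2 n)\<bar>) \<longlonglongrightarrow> overlap_len e1 e2" by blast
    have "\<bar>a\<bar> = overlap_len e1 e2"
      if r: "strict_mono r" and a: "((\<lambda>n. Ord (s1 n) (s2 n)) \<circ> r) \<longlonglongrightarrow> a" for a r
    proof (rule LIMSEQ_unique)
      show "((\<lambda>n. \<bar>Ord (s1 n) (s2 n)\<bar>) \<circ> r) \<longlonglongrightarrow> \<bar>a\<bar>"
        using tendsto_rabs[OF a] by (simp add: o_def)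
      show "((\<lambda>n. \<bar>Ord (s1 n) (s2 n)\<bar>) \<circ> r) \<longlonglongrightarrow> overlap_len e1 e2"
        by (rule LIMSEQ_subseq_LIMSEQ[OF abs_lim r])
    qed
    then show ?thesis by (metis abs_if add.inverse_inverse)
  qed
qed

subsection \<open>Semi-algebraicity\<close>

datatype sign_formula = FEq mpoly | FGt mpoly | FAnd sign_formula sign_formula
  | FOr sign_formula sign_formula | FNot sign_formula

primrec holds :: "sign_formula \<Rightarrow> real list \<Rightarrow> bool" where
  "holds (FEq p) xs = (mpeval p xs = 0)"
| "holds (FGt p) xs = (mpeval p xs > 0)"
| "holds (FAnd \<phi> \<psi>) xs = (holds \<phi> xs \<and> holds \<psi> xs)"
| "holds (FOr \<phi> \<psi>) xs = (holds \<phi> xs \<or> holds \<psi> xs)"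
| "holds (FNot \<phi>) xs = (\<not> holds \<phi> xs)"

definition FGe :: "mpoly \<Rightarrow> sign_formula" where "FGe p = FOr (FGt p) (FEq p)"
definition FTrue :: sign_formula where "FTrue = FEq (Const 0)"
definition FAny :: "sign_formula list \<Rightarrow> sign_formula" where "FAny \<phi>s = foldr FOr \<phi>s (FNot FTrue)"
definition Sub :: "mpoly \<Rightarrow> mpoly \<Rightarrow> mpoly" where "Sub p q = Add p (Neg q)"

lemma holds_derived [simp]:
  "holds (FGe p) xs \<longleftrightarrow> mpeval p xs \<ge> 0"
  "holds FTrue xs"
  "holds (FAny \<phi>s) xs \<longleftrightarrow> (\<exists>\<phi> \<in> set \<phi>s. holds \<phi> xs)"
  "mpeval (Sub p q) xs = mpeval p xs - mpeval q xs"
  by (auto simp: FGe_def FTrue_def FAny_def Sub_def) (induction \<phi>s; auto simp: FTrue_def)+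

lemma semialgebraic_formula: "semialgebraic n {xs \<in> Rn n. holds \<phi> xs}"
proof (induction \<phi>)
  case (FEq p) then show ?case using sa_zero[of n p] by simp
next
  case (FGt p) then show ?case using sa_pos[of n p] by simp
next
  case (FAnd \<phi> \<psi>)
  have "{xs \<in> Rn n. holds (FAnd \<phi> \<psi>) xs} = {xs \<in> Rn n. holds \<phi> xs} \<inter> {xs \<in> Rn n. holds \<psi> xs}" by auto
  then show ?case using sa_inter[OF FAnd.IH] by simp
next
  case (FOr \<phi> \<psi>)
  have "{xs \<in> Rn n. holds (FOr \<phi> \<psi>) xs} = {xs \<in> Rn n. holds \<phi> xs} \<union> {xs \<in> Rn n. holds \<psi> xs}" by auto
  then show ?case using sa_union[OF FOr.IH] by simp
next
  case (FNot \<phi>)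
  have "{xs \<in> Rn n. holds (FNot \<phi>) xs} = Rn n - {xs \<in> Rn n. holds \<phi> xs}" by auto
  then show ?case using sa_compl[OF FNot.IH] by simp
qed

type_synonym piece = "sign_formula \<times> mpoly \<times> mpoly"

definition rational_pieces :: "(real list \<Rightarrow> real) \<Rightarrow> piece list \<Rightarrow> bool" where
  "rational_pieces f R \<longleftrightarrow> (\<forall>xs. \<exists>(\<phi>, N, D) \<in> set R. holds \<phi> xs) \<and>
     (\<forall>(\<phi>, N, D) \<in> set R. \<forall>xs. holds \<phi> xs \<longrightarrow> mpeval D xs \<noteq> 0 \<and> f xs = mpeval N xs / mpeval D xs)"

definition piecewise_rational :: "(real list \<Rightarrow> real) \<Rightarrow> bool" where
  "piecewise_rational f \<longleftrightarrow> (\<exists>R. rational_pieces f R)"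

lemma rational_pieces_cover: "rational_pieces f R \<Longrightarrow> \<exists>\<phi> N D. (\<phi>, N, D) \<in> set R \<and> holds \<phi> xs"
  unfolding rational_pieces_def by blast

lemma rational_pieces_value:
  "rational_pieces f R \<Longrightarrow> (\<phi>, N, D) \<in> set R \<Longrightarrow> holds \<phi> xs \<Longrightarrow>
     mpeval D xs \<noteq> 0 \<and> f xs = mpeval N xs / mpeval D xs"
  unfolding rational_pieces_def by fastforce

lemma piecewise_rational_poly: "piecewise_rational (mpeval p)"
proof -
  have "rational_pieces (mpeval p) [(FTrue, p, Const 1)]" by (simp add: rational_pieces_def)
  then show ?thesis unfolding piecewise_rational_def ..
qed

lemma piecewise_rational_combine:
  fixes h :: "real \<Rightarrow> real \<Rightarrow> real" and g :: "mpoly \<Rightarrow> mpoly \<Rightarrow> mpoly \<Rightarrow> mpoly \<Rightarrow> piece list"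
  assumes a: "piecewise_rational a" and b: "piecewise_rational b"
    and cover: "\<And>N D M E xs. mpeval D xs \<noteq> 0 \<Longrightarrow> mpeval E xs \<noteq> 0 \<Longrightarrow>
       \<exists>(\<theta>, P, Q) \<in> set (g N D M E). holds \<theta> xs"
    and correct: "\<And>N D M E \<theta> P Q xs. (\<theta>, P, Q) \<in> set (g N D M E) \<Longrightarrow> holds \<theta> xs \<Longrightarrow>
       mpeval D xs \<noteq> 0 \<Longrightarrow> mpeval E xs \<noteq> 0 \<Longrightarrow>
       mpeval Q xs \<noteq> 0 \<and> h (mpeval N xs / mpeval D xs) (mpeval M xs / mpeval E xs) = mpeval P xs / mpeval Q xs"
  shows "piecewise_rational (\<lambda>xs. h (a xs) (b xs))"
proof -
  obtain R S where R: "rational_pieces a R" and S: "rational_pieces b S"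
    using a b unfolding piecewise_rational_def by blast
  define T where "T = [(FAnd (FAnd \<phi> \<psi>) \<theta>, P, Q). (\<phi>, N, D) \<leftarrow> R, (\<psi>, M, E) \<leftarrow> S, (\<theta>, P, Q) \<leftarrow> g N D M E]"
  have T: "(\<rho>, P, Q) \<in> set T \<longleftrightarrow> (\<exists>\<phi> N D \<psi> M E \<theta>. (\<phi>, N, D) \<in> set R \<and> (\<psi>, M, E) \<in> set S \<and>
      (\<theta>, P, Q) \<in> set (g N D M E) \<and> \<rho> = FAnd (FAnd \<phi> \<psi>) \<theta>)" for \<rho> P Q
    unfolding T_def by (auto simp: split_beta) force+
  have "rational_pieces (\<lambda>xs. h (a xs) (b xs)) T"
    unfolding rational_pieces_def
  proof (intro conjI allI ballI)
    fix xs
    obtain \<phi> N D \<psi> M E where pa: "(\<phi>, N, D) \<in> set R" "holds \<phi> xs" and pb: "(\<psi>, M, E) \<in> set S" "holds \<psi> xs"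
      using rational_pieces_cover[OF R] rational_pieces_cover[OF S] by meson
    then obtain \<theta> P Q where "(\<theta>, P, Q) \<in> set (g N D M E)" "holds \<theta> xs"
      using cover rational_pieces_value[OF R pa] rational_pieces_value[OF S pb] by blast
    with pa pb have "(FAnd (FAnd \<phi> \<psi>) \<theta>, P, Q) \<in> set T" "holds (FAnd (FAnd \<phi> \<psi>) \<theta>) xs"
      unfolding T by (blast, simp)
    then show "\<exists>(\<rho>, P, Q) \<in> set T. holds \<rho> xs" by blast
  next
    fix t assume t: "t \<in> set T"
    obtain \<rho> P Q where tt: "t = (\<rho>, P, Q)" by (cases t)
    show "case t of (\<rho>, P, Q) \<Rightarrow> \<forall>xs. holds \<rho> xs \<longrightarrow>
            mpeval Q xs \<noteq> 0 \<and> h (a xs) (b xs) = mpeval P xs / mpeval Q xs"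
      unfolding tt prod.case
    proof (intro allI impI)
      fix xs assume "holds \<rho> xs"
      with t show "mpeval Q xs \<noteq> 0 \<and> h (a xs) (b xs) = mpeval P xs / mpeval Q xs"
        unfolding tt T using rational_pieces_value[OF R] rational_pieces_value[OF S] correct by fastforce
    qed
  qed
  then show ?thesis unfolding piecewise_rational_def ..
qed

lemma piecewise_rational_const: "piecewise_rational (\<lambda>_. c)"
proof -
  have "mpeval (Const c) = (\<lambda>_. c)" by (rule ext) simp
  then show ?thesis using piecewise_rational_poly[of "Const c"] by simp
qed

lemma piecewise_rational_add:
  assumes "piecewise_rational a" "piecewise_rational b"
  shows "piecewise_rational (\<lambda>xs. a xs + b xs)"
  by (rule piecewise_rational_combine[OF assms, where h = "(+)"
        and g = "\<lambda>N D M E. [(FTrue, Add (Mul N E) (Mul M D), Mul D E)]"])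
    (auto simp: field_simps)

lemma piecewise_rational_diff:
  assumes "piecewise_rational a" "piecewise_rational b"
  shows "piecewise_rational (\<lambda>xs. a xs - b xs)"
  by (rule piecewise_rational_combine[OF assms, where h = "(-)"
        and g = "\<lambda>N D M E. [(FTrue, Sub (Mul N E) (Mul M D), Mul D E)]"])
    (auto simp: field_simps)

lemma piecewise_rational_mult:
  assumes "piecewise_rational a" "piecewise_rational b"
  shows "piecewise_rational (\<lambda>xs. a xs * b xs)"
  by (rule piecewise_rational_combine[OF assms, where h = "(*)"
        and g = "\<lambda>N D M E. [(FTrue, Mul N M, Mul D E)]"]) auto

lemma piecewise_rational_divide:
  assumes "piecewise_rational a" "piecewise_rational b"
  shows "piecewise_rational (\<lambda>xs. a xs / b xs)"
proof (rule piecewise_rational_combine[OF assms, where h = "(/)"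
    and g = "\<lambda>N D M E. [(FNot (FEq M), Mul N E, Mul D M), (FEq M, Const 0, Const 1)]"])
  show "\<exists>(\<theta>, P, Q) \<in> set [(FNot (FEq M), Mul N E, Mul D M), (FEq M, Const 0, Const 1)]. holds \<theta> xs"
    for N D M E :: mpoly and xs by (cases "mpeval M xs = 0") auto
qed auto

lemma frac_le_iff:
  fixes n d m e :: real
  assumes "d \<noteq> 0" "e \<noteq> 0"
  shows "m / e \<le> n / d \<longleftrightarrow> 0 \<le> (n * e - m * d) * (d * e)"
proof -
  have "n / d - m / e = (n * e - m * d) / (d * e)" using assms by (simp add: field_simps)
  then have "m / e \<le> n / d \<longleftrightarrow> 0 \<le> (n * e - m * d) / (d * e)" by linarith
  also have "\<dots> \<longleftrightarrow> 0 \<le> (n * e - m * d) * (d * e)" using assms by (auto simp: zero_le_divide_iff zero_le_mult_iff)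
  finally show ?thesis .
qed

lemma piecewise_rational_max:
  assumes "piecewise_rational a" "piecewise_rational b"
  shows "piecewise_rational (\<lambda>xs. max (a xs) (b xs))"
  by (rule piecewise_rational_combine[OF assms, where h = max and g = "\<lambda>N D M E.
      [(FGe (Mul (Sub (Mul N E) (Mul M D)) (Mul D E)), N, D),
       (FNot (FGe (Mul (Sub (Mul N E) (Mul M D)) (Mul D E))), M, E)]"])
    (auto simp: frac_le_iff[symmetric] max_absorb1 max_absorb2)

lemma piecewise_rational_step:
  assumes "piecewise_rational a"
  shows "piecewise_rational (\<lambda>xs. if 0 \<le> a xs then 1 else 0)"
  by (rule piecewise_rational_combine[OF assms piecewise_rational_const[of 0], where h = "\<lambda>x _. if 0 \<le> x then 1 else 0"
        and g = "\<lambda>N D M E. [(FGe (Mul N D), Const 1, Const 1), (FNot (FGe (Mul N D)), Const 0, Const 1)]"])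
    (auto simp: zero_le_divide_iff zero_le_mult_iff)

lemma piecewise_rational_min:
  assumes "piecewise_rational a" "piecewise_rational b"
  shows "piecewise_rational (\<lambda>xs. min (a xs) (b xs))"
proof -
  have "(\<lambda>xs. min (a xs) (b xs)) = (\<lambda>xs. a xs + b xs - max (a xs) (b xs))" by (auto simp: min_def max_def)
  then show ?thesis by (simp add: assms piecewise_rational_add piecewise_rational_diff piecewise_rational_max)
qed

lemma piecewise_rational_minus: "piecewise_rational a \<Longrightarrow> piecewise_rational (\<lambda>xs. - a xs)"
  using piecewise_rational_diff[OF piecewise_rational_const[of 0] _] by simp

lemma piecewise_rational_if:
  assumes "piecewise_rational c" "piecewise_rational a" "piecewise_rational b"
  shows "piecewise_rational (\<lambda>xs. if 0 \<le> c xs then a xs else b xs)"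
proof -
  let ?s = "\<lambda>xs. if 0 \<le> c xs then 1 else 0 :: real"
  have "(\<lambda>xs. if 0 \<le> c xs then a xs else b xs) = (\<lambda>xs. ?s xs * a xs + (1 - ?s xs) * b xs)" by auto
  then show ?thesis
    by (simp add: assms piecewise_rational_add piecewise_rational_mult piecewise_rational_diff
        piecewise_rational_const piecewise_rational_step)
qed

lemmas piecewise_rational_intros = piecewise_rational_const piecewise_rational_add piecewise_rational_diff
  piecewise_rational_mult piecewise_rational_divide piecewise_rational_max piecewise_rational_min
  piecewise_rational_minus piecewise_rational_if

lemma eq_div_sqrt_iff:
  fixes t N D L :: real
  assumes L: "L > 0" and D: "D \<noteq> 0"
  shows "t = N / D / sqrt L \<longleftrightarrow> t * t * L * (D * D) - N * N = 0 \<and> 0 \<le> t * N * D"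
proof -
  define s where "s = sqrt L"
  define u where "u = t * s * D"
  have s: "s > 0" "s * s = L" using L by (simp_all add: s_def)
  have "t = N / D / sqrt L \<longleftrightarrow> u = N" using s D by (auto simp: u_def s_def[symmetric] field_simps)
  moreover have "t * t * L * (D * D) = u * u" "t * N * D = u * N / s"
    using s by (simp_all add: u_def field_simps flip: s(2))
  moreover have "u = N \<longleftrightarrow> u * u = N * N \<and> 0 \<le> u * N"
    by (metis mult_minus_left neg_0_le_iff_le mult_eq_0_iff square_eq_iff zero_le_square
        order_antisym minus_zero)
  ultimately show ?thesis using s by (simp add: zero_le_divide_iff)
qed

lemma semialgebraic_graph_div_sqrt:
  assumes G: "piecewise_rational G" and q: "\<And>xs. 0 \<le> mpeval q xs"
  shows "semialgebraic (Suc n)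
    {xs \<in> Rn (Suc n). xs ! n = (if mpeval q xs = 0 then 0 else G xs / sqrt (mpeval q xs))}"
proof -
  obtain R where R: "rational_pieces G R" using G unfolding piecewise_rational_def by blast
  define graph_piece :: "piece \<Rightarrow> sign_formula" where
    "graph_piece = (\<lambda>(\<phi>, N, D). FAnd \<phi> (FAnd (FEq (Sub (Mul (Mul (Mul (Var n) (Var n)) q) (Mul D D)) (Mul N N)))
                                   (FGe (Mul (Mul (Var n) N) D))))"
  define \<Phi> where "\<Phi> = FOr (FAnd (FEq q) (FEq (Var n))) (FAnd (FNot (FEq q)) (FAny (map graph_piece R)))"
  have "xs ! n = (if mpeval q xs = 0 then 0 else G xs / sqrt (mpeval q xs)) \<longleftrightarrow> holds \<Phi> xs" for xs
  proof (cases "mpeval q xs = 0")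
    case False
    then have qpos: "mpeval q xs > 0" using q[of xs] by simp
    have "xs ! n = G xs / sqrt (mpeval q xs) \<longleftrightarrow> (\<exists>p \<in> set R. holds (graph_piece p) xs)"
    proof
      assume h: "xs ! n = G xs / sqrt (mpeval q xs)"
      obtain \<phi> N D where p: "(\<phi>, N, D) \<in> set R" "holds \<phi> xs" using rational_pieces_cover[OF R] by blast
      with h have "holds (graph_piece (\<phi>, N, D)) xs"
        using rational_pieces_value[OF R p] eq_div_sqrt_iff[OF qpos] by (simp add: graph_piece_def)
      with p show "\<exists>p \<in> set R. holds (graph_piece p) xs" by blast
    next
      assume "\<exists>p \<in> set R. holds (graph_piece p) xs"
      then obtain \<phi> N D where p: "(\<phi>, N, D) \<in> set R" "holds (graph_piece (\<phi>, N, D)) xs"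
        by (metis prod_cases3)
      then have "holds \<phi> xs" by (simp add: graph_piece_def)
      with p show "xs ! n = G xs / sqrt (mpeval q xs)"
        using rational_pieces_value[OF R p(1)] eq_div_sqrt_iff[OF qpos] by (simp add: graph_piece_def)
    qed
    with False show ?thesis by (simp add: \<Phi>_def)
  qed (simp add: \<Phi>_def)
  then have "{xs \<in> Rn (Suc n). xs ! n = (if mpeval q xs = 0 then 0 else G xs / sqrt (mpeval q xs))}
      = {xs \<in> Rn (Suc n). holds \<Phi> xs}" by blast
  then show ?thesis by (simp add: semialgebraic_formula)
qed


lemma piecewise_rational_ord_frame:
  assumes "piecewise_rational x1" "piecewise_rational y1" "piecewise_rational x2"
    "piecewise_rational y2" "piecewise_rational l"
  shows "piecewise_rational (\<lambda>xs. ord_frame (x1 xs) (y1 xs) (x2 xs) (y2 xs) (l xs))"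
  unfolding ord_frame_def proj_left_def cross_def ival_def
  by (intro piecewise_rational_intros assms)

lemma ival_scale: "c > 0 \<Longrightarrow> ival (a / c) (b / c) (l / c) = ival a b l / c"
  by (simp add: ival_def min_divide_distrib_right max_divide_distrib_right diff_divide_distrib)

lemma cross_scale:
  assumes "c > 0"
  shows "cross (x1 / c) (y1 / c) (x2 / c) (y2 / c) = cross x1 y1 x2 y2 / c"
proof -
  have "(y1 / c) / (y1 / c - y2 / c) = y1 / (y1 - y2)"
    using assms by (simp add: diff_divide_distrib[symmetric])
  then show ?thesis by (simp add: cross_def diff_divide_distrib[symmetric] add_divide_distrib)
qed

lemma proj_left_scale:
  "c > 0 \<Longrightarrow> proj_left (x1 / c) (y1 / c) (x2 / c) (y2 / c) (l / c) = proj_left x1 y1 x2 y2 l / c"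
  by (simp add: proj_left_def zero_le_divide_iff cross_scale ival_scale)

lemma ord_frame_scale:
  assumes "c > 0"
  shows "ord_frame (x1 / c) (y1 / c) (x2 / c) (y2 / c) (l / c) = ord_frame x1 y1 x2 y2 l / c"
  unfolding ord_frame_def minus_divide_left proj_left_scale[OF assms] by (simp add: diff_divide_distrib)

text \<open>Polynomials in the 8 endpoint coordinates: direction and squared length of e1, and the
  frame coordinates multiplied by the length.\<close>
definition dir_x :: mpoly where "dir_x = Sub (Var 2) (Var 0)"
definition dir_y :: mpoly where "dir_y = Sub (Var 3) (Var 1)"
definition len_sq :: mpoly where "len_sq = Add (Mul dir_x dir_x) (Mul dir_y dir_y)"
definition frame_x :: "nat \<Rightarrow> nat \<Rightarrow> mpoly" where
  "frame_x i j = Add (Mul (Sub (Var i) (Var 0)) dir_x) (Mul (Sub (Var j) (Var 1)) dir_y)"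
definition frame_y :: "nat \<Rightarrow> nat \<Rightarrow> mpoly" where
  "frame_y i j = Sub (Mul dir_x (Sub (Var j) (Var 1))) (Mul dir_y (Sub (Var i) (Var 0)))"

definition ord_numerator :: "real list \<Rightarrow> real" where
  "ord_numerator xs = ord_frame (mpeval (frame_x 4 5) xs) (mpeval (frame_y 4 5) xs)
     (mpeval (frame_x 6 7) xs) (mpeval (frame_y 6 7) xs) (mpeval len_sq xs)"

lemma Ord8_eq:
  "Ord8 xs = (if mpeval len_sq xs = 0 then 0 else ord_numerator xs / sqrt (mpeval len_sq xs))"
proof -
  define e1 where "e1 = ((xs ! 0, xs ! 1), (xs ! 2, xs ! 3))"
  define e2 where "e2 = ((xs ! 4, xs ! 5), (xs ! 6, xs ! 7))"
  define q where "q = mpeval len_sq xs"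
  define s where "s = sqrt q"
  have len: "seg_len e1 = s"
    by (simp add: seg_len_def e1_def s_def q_def len_sq_def dir_x_def dir_y_def dist_Pair_Pair
        dist_real_def power2_eq_square algebra_simps)
  show ?thesis
  proof (cases "q = 0")
    case True
    then show ?thesis using len by (simp add: Ord8_def Ord_degenerate e1_def e2_def s_def q_def)
  next
    case False
    have q0: "0 \<le> q" by (simp add: q_def len_sq_def)
    with False have s: "s > 0" by (simp add: s_def)
    have coords: "X1 e1 e2 = mpeval (frame_x 4 5) xs / s" "X2 e1 e2 = mpeval (frame_x 6 7) xs / s"
      "Y1 e1 e2 = mpeval (frame_y 4 5) xs / s" "Y2 e1 e2 = mpeval (frame_y 6 7) xs / s"
      unfolding xcoord_def ycoord_def len
      by (simp_all add: e1_def e2_def frame_x_def frame_y_def dir_x_def dir_y_def)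
    have "Ord e1 e2 = ord_frame (X1 e1 e2) (Y1 e1 e2) (X2 e1 e2) (Y2 e1 e2) (seg_len e1)"
      using s by (simp add: Ord_frame len)
    also have "seg_len e1 = q / s" using q0 by (simp add: len s_def real_div_sqrt)
    also have "ord_frame (X1 e1 e2) (Y1 e1 e2) (X2 e1 e2) (Y2 e1 e2) (q / s) = ord_numerator xs / s"
      unfolding coords ord_frame_scale[OF s] by (simp add: ord_numerator_def q_def)
    finally show ?thesis by (simp add: Ord8_def e1_def e2_def s_def q_def)
  qed
qed

theorem Ord8_semialgebraic: "semialgebraic_fun 8 Ord8"
proof -
  have "piecewise_rational ord_numerator"
    unfolding ord_numerator_def by (intro piecewise_rational_ord_frame piecewise_rational_poly)
  moreover have "0 \<le> mpeval len_sq xs" for xs by (simp add: len_sq_def)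
  ultimately have "semialgebraic (Suc 8)
      {xs \<in> Rn (Suc 8). xs ! 8 = (if mpeval len_sq xs = 0 then 0 else ord_numerator xs / sqrt (mpeval len_sq xs))}"
    by (rule semialgebraic_graph_div_sqrt)
  moreover have "Ord8 (take 8 xs) = Ord8 xs" for xs by (simp add: Ord8_def)
  ultimately show ?thesis unfolding semialgebraic_fun_def by (simp add: Ord8_eq)
qed

theorem mainTheorem1:
  shows "semialgebraic_fun 8 Ord8
    \<and> continuous_on {(e1, e2). no_interior_intersection e1 e2} (\<lambda>(e1, e2). Ord e1 e2)
    \<and> (\<forall>(s1 :: nat \<Rightarrow> oseg) s2 e1 e2.
           s1 \<longlonglongrightarrow> e1 \<longrightarrow> s2 \<longlonglongrightarrow> e2 \<longrightarrow>
           (\<forall>n. no_interior_intersection (s1 n) (s2 n)) \<longrightarrow>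
           ((\<lambda>n. Ord (s1 n) (s2 n)) \<longlonglongrightarrow> Ord e1 e2 \<or>
            (\<forall>a. (\<exists>r. strict_mono r \<and> ((\<lambda>n. Ord (s1 n) (s2 n)) \<circ> r) \<longlonglongrightarrow> a)
                  \<longrightarrow> a = overlap_len e1 e2 \<or> a = - overlap_len e1 e2)))"
  using Ord8_semialgebraic Ord_continuous_nii Ord_sequence_accumulation by blast

end
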